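(* For all sufficiently large $N$, the semigroup generated by $\Gamma_N$ is Zariski dense in $\mathrm{SL}(3,\mathbb R)$.
   Context: Let $A_1=\begin{pmatrix}1&1&1\\0&1&0\\0&0&1\end{pmatrix}$, $A_2=\begin{pmatrix}1&0&0\\1&1&1\\0&0&1\end{pmatrix}$, $A_3=\begin{pmatrix}1&0&0\\0&1&0\\1&1&1\end{pmatrix}$, $\Gamma=\{A_i^nA_j: i\ne j\in\{1,2,3\},\ n\ge1\}$, and let $(\Gamma_N)_N$ be an increasing sequence of finite subsets of $\Gamma$ with $\bigcup_N\Gamma_N=\Gamma$. The Zariski topology on $\mathrm{SL}(3,\mathbb R)$ has as closed sets the common zero sets of families of polynomials in the matrix entries. *)

theory Defs
  imports "HOL-Analysis.Analysis"
begin

type_synonym mat3 = "real^3^3"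

text \<open>Rows are listed top to bottom; vector [a,b,c] has components 1,2,3.\<close>
definition A1 :: mat3 where
  "A1 = vector [vector [1,1,1], vector [0,1,0], vector [0,0,1]]"
definition A2 :: mat3 where
  "A2 = vector [vector [1,0,0], vector [1,1,1], vector [0,0,1]]"
definition A3 :: mat3 where
  "A3 = vector [vector [1,0,0], vector [0,1,0], vector [1,1,1]]"

definition Amat :: "nat \<Rightarrow> mat3" where
  "Amat i = (if i = 1 then A1 else if i = 2 then A2 else A3)"

definition matpow :: "mat3 \<Rightarrow> nat \<Rightarrow> mat3" where
  "matpow A n = (((**) A) ^^ n) (mat 1)"

definition GammaSet :: "mat3 set" where
  "GammaSet = {matpow (Amat i) n ** Amat j | i j n.
              i \<in> {1,2,3} \<and> j \<in> {1,2,3} \<and> i \<noteq> j \<and> n \<ge> 1}"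

definition SL3 :: "mat3 set" where
  "SL3 = {A. det A = 1}"

inductive polyfun :: "(mat3 \<Rightarrow> real) \<Rightarrow> bool" where
  const: "polyfun (\<lambda>_. c)"
| entry: "polyfun (\<lambda>A. A $ i $ j)"
| add: "polyfun p \<Longrightarrow> polyfun q \<Longrightarrow> polyfun (\<lambda>A. p A + q A)"
| mult: "polyfun p \<Longrightarrow> polyfun q \<Longrightarrow> polyfun (\<lambda>A. p A * q A)"

definition zariski_closure_SL3 :: "mat3 set \<Rightarrow> mat3 set" where
  "zariski_closure_SL3 S =
     {x \<in> SL3. \<forall>p. polyfun p \<and> (\<forall>s\<in>S. p s = 0) \<longrightarrow> p x = 0}"

definition zariski_dense_SL3 :: "mat3 set \<Rightarrow> bool" where
  "zariski_dense_SL3 S \<longleftrightarrow> S \<subseteq> SL3 \<and> zariski_closure_SL3 S = SL3"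

inductive_set semigroup_gen :: "mat3 set \<Rightarrow> mat3 set" for G where
  gen: "g \<in> G \<Longrightarrow> g \<in> semigroup_gen G"
| mul: "a \<in> semigroup_gen G \<Longrightarrow> b \<in> semigroup_gen G \<Longrightarrow> a ** b \<in> semigroup_gen G"

end

(*
  The Zariski closure of a semigroup S of invertible matrices is closed under inversion: if p is a
  polynomial vanishing on S and w is in S, the right translates X \<mapsto> p (X w^i) all lie in one
  finite-dimensional space of functions, so some p (X w^n) is a linear combination of later ones
  p (X w^i), i > n; evaluating at X w^-(n+1) shows that p (X w^-1) vanishes on the closure.

  Write A_k = I + N_k, where N_k has ones off the diagonal in row k. Then A_k^n A_j = (I + n N_k) A_j,
  so the closure of the semigroup generated by A_k A_j and A_k^2 A_j contains
  (A_k^2 A_j)(A_k A_j)^-1 = A_k and all I + n N_k, n \<ge> 1; as a polynomial in t vanishing at every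
  positive integer is zero, it contains the whole one-parameter group I + t N_k. For
  (k, j) = (1, 2), (2, 1), (3, 1) these groups generate every elementary matrix and hence SL(3, R),
  and the six matrices used lie in Gamma_N once N is large.
*)
theory Submission
  imports Defs "HOL-Library.Function_Algebras" "HOL-Computational_Algebra.Polynomial"
begin

interpretation fun_vs: vector_space "\<lambda>(c::real) (f::'a \<Rightarrow> real) x. c * f x"
  by unfold_locales (auto simp: algebra_simps)

lemma fun_vs_subspace_times_preimage:
  fixes k :: "'a \<Rightarrow> real"
  assumes "fun_vs.subspace S"
  shows "fun_vs.subspace {h. h * k \<in> S}"
proof (rule fun_vs.subspaceI, unfold mem_Collect_eq)
  show "0 * k \<in> S"
    using assms fun_vs.subspace_0 by simp
  show "(h1 + h2) * k \<in> S" if "h1 * k \<in> S" "h2 * k \<in> S" for h1 h2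
    using assms that fun_vs.subspace_add by (simp add: distrib_right)
  have "(\<lambda>x. c * h x) * k = (\<lambda>x. c * (h * k) x)" for c h
    by (simp add: fun_eq_iff)
  then show "(\<lambda>x. c * h x) * k \<in> S" if "h * k \<in> S" for c h
    using assms that fun_vs.subspace_scale by metis
qed

lemma fun_vs_span_times:
  fixes f g :: "'a \<Rightarrow> real"
  assumes f: "f \<in> fun_vs.span B" and g: "g \<in> fun_vs.span C"
  shows "f * g \<in> fun_vs.span ((\<lambda>(b, c). b * c) ` (B \<times> C))"
proof -
  let ?T = "(\<lambda>(b, c). b * c) ` (B \<times> C)"
  have gB: "g * b \<in> fun_vs.span ?T" if "b \<in> B" for b
    by (rule fun_vs.span_induct[OF g fun_vs_subspace_times_preimage[OF fun_vs.subspace_span]])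
      (use that in \<open>auto intro!: fun_vs.span_base rev_image_eqI[of "(b, _)"] simp: mult.commute\<close>)
  show ?thesis
    by (rule fun_vs.span_induct[OF f fun_vs_subspace_times_preimage[OF fun_vs.subspace_span]])
      (simp only: mult.commute[of _ g] gB)
qed

lemma (in vector_space) independent_if_notin_span_successors:
  fixes f :: "nat \<Rightarrow> 'b"
  assumes "\<And>n. f n \<notin> span (f ` {n<..})"
  shows "independent (f ` {k..<k+m}) \<and> card (f ` {k..<k+m}) = m"
proof (induction m arbitrary: k)
  case (Suc m)
  have split: "f ` {k..<Suc (k + m)} = insert (f k) (f ` {Suc k..<Suc (k + m)})"
    by (auto simp: image_iff) (metis atLeastLessThan_iff le_antisym not_less_eq_eq)
  have "span (f ` {Suc k..<Suc (k + m)}) \<subseteq> span (f ` {k<..})"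
    by (intro span_mono image_mono) auto
  then have "f k \<notin> span (f ` {Suc k..<Suc (k + m)})"
    using assms[of k] by blast
  moreover from this have "f k \<notin> f ` {Suc k..<Suc (k + m)}"
    using span_base by blast
  ultimately show ?case
    using Suc.IH[of "Suc k"] by (simp add: split independent_insert)
qed (simp add: independent_empty)

lemma (in vector_space) ex_in_span_successors:
  fixes f :: "nat \<Rightarrow> 'b"
  assumes "finite B" "range f \<subseteq> span B"
  shows "\<exists>n. f n \<in> span (f ` {n<..})"
proof (rule ccontr)
  assume "\<nexists>n. f n \<in> span (f ` {n<..})"
  then have "independent (f ` {0..<Suc (card B)})" "card (f ` {0..<Suc (card B)}) = Suc (card B)"
    using independent_if_notin_span_successors[of f 0 "Suc (card B)"] by auto
  then show False
    using independent_span_bound[OF assms(1), of "f ` {0..<Suc (card B)}"] assms(2) by auto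
qed

lemma polyfun_sum: "(\<And>i. i \<in> I \<Longrightarrow> polyfun (f i)) \<Longrightarrow> polyfun (\<lambda>X. \<Sum>i\<in>I. f i X)"
  by (induction I rule: infinite_finite_induct) (auto intro: polyfun.intros)

lemma polyfun_compose:
  assumes "polyfun p" and "\<And>i j. polyfun (\<lambda>X. \<Phi> X $ i $ j)"
  shows "polyfun (\<lambda>X. p (\<Phi> X))"
  using assms(1) by induction (simp_all add: assms(2) polyfun.intros)

lemma polyfun_matrix_mult_entry:
  assumes "\<And>i j. polyfun (\<lambda>X. F X $ i $ j)" and "\<And>i j. polyfun (\<lambda>X. G X $ i $ j)"
  shows "polyfun (\<lambda>X. (F X ** G X) $ i $ j)"
  unfolding matrix_matrix_mult_def by (simp add: polyfun_sum polyfun.mult assms)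

lemma polyfun_mult_left: "polyfun p \<Longrightarrow> polyfun (\<lambda>X. p (B ** X))"
  by (erule polyfun_compose) (simp add: polyfun_matrix_mult_entry polyfun.intros)

lemma polyfun_mult_right: "polyfun p \<Longrightarrow> polyfun (\<lambda>X. p (X ** B))"
  by (erule polyfun_compose) (simp add: polyfun_matrix_mult_entry polyfun.intros)

lemma polyfun_on_line: "polyfun p \<Longrightarrow> \<exists>Q. \<forall>t. p (C + t *\<^sub>R D) = poly Q t"
proof (induction rule: polyfun.induct)
  case (const c)
  show ?case by (rule exI[of _ "[:c:]"]) simp
next
  case (entry i j)
  show ?case by (rule exI[of _ "[:C$i$j, D$i$j:]"]) simp
next
  case (add p q)
  then obtain P Q where "\<forall>t. p (C + t *\<^sub>R D) = poly P t" "\<forall>t. q (C + t *\<^sub>R D) = poly Q t"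
    by blast
  then show ?case by (intro exI[of _ "P + Q"]) simp
next
  case (mult p q)
  then obtain P Q where "\<forall>t. p (C + t *\<^sub>R D) = poly P t" "\<forall>t. q (C + t *\<^sub>R D) = poly Q t"
    by blast
  then show ?case by (intro exI[of _ "P * Q"]) simp
qed

lemma polyfun_right_translates_finite_span:
  "polyfun p \<Longrightarrow> \<exists>B. finite B \<and> (\<forall>W::mat3. (\<lambda>X. p (X ** W)) \<in> fun_vs.span B)"
proof (induction rule: polyfun.induct)
  case (const c)
  show ?case by (rule exI[of _ "{\<lambda>_. c}"]) (auto intro: fun_vs.span_base)
next
  case (entry i j)
  have "(\<lambda>X. (X ** W) $ i $ j) \<in> fun_vs.span (range (\<lambda>k X. X $ i $ k))" for W :: mat3
  proof -
    have "(\<lambda>X. (X ** W) $ i $ j) =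
        (\<lambda>X. W$1$j * X$i$1) + (\<lambda>X. W$2$j * X$i$2) + (\<lambda>X. W$3$j * X$i$3)"
      by (simp add: fun_eq_iff matrix_matrix_mult_def sum_3 mult.commute)
    then show ?thesis
      by (simp only:) (intro fun_vs.span_add fun_vs.span_scale fun_vs.span_base rangeI)
  qed
  then show ?case by (intro exI[of _ "range (\<lambda>k X. X $ i $ k)"]) simp
next
  case (add p q)
  then obtain B C where B: "finite B" "\<And>W :: mat3. (\<lambda>X. p (X ** W)) \<in> fun_vs.span B"
    and C: "finite C" "\<And>W :: mat3. (\<lambda>X. q (X ** W)) \<in> fun_vs.span C" by blast
  have "(\<lambda>X. p (X ** W)) + (\<lambda>X. q (X ** W)) \<in> fun_vs.span (B \<union> C)" for W :: mat3
  proof (rule fun_vs.span_add)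
    show "(\<lambda>X. p (X ** W)) \<in> fun_vs.span (B \<union> C)"
      using B(2) fun_vs.span_mono[of B "B \<union> C"] by blast
    show "(\<lambda>X. q (X ** W)) \<in> fun_vs.span (B \<union> C)"
      using C(2) fun_vs.span_mono[of C "B \<union> C"] by blast
  qed
  with B(1) C(1) show ?case by (intro exI[of _ "B \<union> C"]) (simp add: plus_fun_def)
next
  case (mult p q)
  then obtain B C where B: "finite B" "\<And>W :: mat3. (\<lambda>X. p (X ** W)) \<in> fun_vs.span B"
    and C: "finite C" "\<And>W :: mat3. (\<lambda>X. q (X ** W)) \<in> fun_vs.span C" by blast
  have "(\<lambda>X. p (X ** W)) * (\<lambda>X. q (X ** W)) \<in> fun_vs.span ((\<lambda>(b, c). b * c) ` (B \<times> C))" for W :: mat3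
    using B(2) C(2) by (rule fun_vs_span_times)
  with B(1) C(1) show ?case
    by (intro exI[of _ "(\<lambda>(b, c). b * c) ` (B \<times> C)"]) (simp add: times_fun_def)
qed

lemma matpow_0 [simp]: "matpow A 0 = mat 1"
  by (simp add: matpow_def)

lemma matpow_Suc: "matpow A (Suc n) = A ** matpow A n"
  by (simp add: matpow_def)

lemma matpow_add: "matpow A (m + n) = matpow A m ** matpow A n"
  by (induction m) (simp_all add: matpow_Suc matrix_mul_assoc)

lemma matpow_Suc_right: "matpow A (Suc n) = matpow A n ** A"
  using matpow_add[of A n 1] by (simp add: matpow_Suc)

lemma matpow_mult_inverse:
  assumes "V ** W = mat 1"
  shows "matpow V n ** matpow W n = mat 1"
proof (induction n)
  case (Suc n)
  have "matpow V (Suc n) ** matpow W (Suc n) = matpow V n ** (V ** W) ** matpow W n"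
    by (simp only: matpow_Suc_right[of V] matpow_Suc[of W] matrix_mul_assoc)
  with Suc.IH assms show ?case by simp
qed simp

definition mult_closed :: "mat3 set \<Rightarrow> bool" where
  "mult_closed S \<longleftrightarrow> (\<forall>a\<in>S. \<forall>b\<in>S. a ** b \<in> S)"

lemma mult_closedD: "mult_closed S \<Longrightarrow> a \<in> S \<Longrightarrow> b \<in> S \<Longrightarrow> a ** b \<in> S"
  by (simp add: mult_closed_def)

definition zariski_closure :: "mat3 set \<Rightarrow> mat3 set" where
  "zariski_closure S = {X. \<forall>p. polyfun p \<and> (\<forall>s\<in>S. p s = 0) \<longrightarrow> p X = 0}"

lemma zariski_closure_SL3_eq: "zariski_closure_SL3 S = SL3 \<inter> zariski_closure S"
  by (auto simp: zariski_closure_SL3_def zariski_closure_def)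

lemma zariski_closure_subset: "S \<subseteq> zariski_closure S"
  by (auto simp: zariski_closure_def)

lemma zariski_closure_mono: "S \<subseteq> T \<Longrightarrow> zariski_closure S \<subseteq> zariski_closure T"
  by (auto simp: zariski_closure_def)

lemma zariski_closure_vanishing:
  "X \<in> zariski_closure S \<Longrightarrow> polyfun p \<Longrightarrow> (\<And>s. s \<in> S \<Longrightarrow> p s = 0) \<Longrightarrow> p X = 0"
  by (auto simp: zariski_closure_def)

lemma zariski_closureI:
  "(\<And>p. polyfun p \<Longrightarrow> (\<And>s. s \<in> S \<Longrightarrow> p s = 0) \<Longrightarrow> p X = 0) \<Longrightarrow> X \<in> zariski_closure S"
  by (auto simp: zariski_closure_def)

lemma zariski_closure_mult_right:
  assumes "mult_closed S" "X \<in> zariski_closure S" "a \<in> S"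
  shows "X ** a \<in> zariski_closure S"
proof (rule zariski_closureI)
  fix p assume "polyfun p" and p: "\<And>s. s \<in> S \<Longrightarrow> p s = 0"
  have "p (s ** a) = 0" if "s \<in> S" for s
    using assms(1,3) that p by (simp add: mult_closed_def)
  with assms(2) polyfun_mult_right[OF \<open>polyfun p\<close>] show "p (X ** a) = 0"
    by (rule zariski_closure_vanishing)
qed

lemma zariski_closure_mult:
  assumes "mult_closed S" "X \<in> zariski_closure S" "Y \<in> zariski_closure S"
  shows "X ** Y \<in> zariski_closure S"
proof (rule zariski_closureI)
  fix p assume "polyfun p" and p: "\<And>s. s \<in> S \<Longrightarrow> p s = 0"
  have "p (X ** s) = 0" if "s \<in> S" for s
    using zariski_closure_mult_right[OF assms(1,2) that] \<open>polyfun p\<close> p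
    by (rule zariski_closure_vanishing)
  with assms(3) polyfun_mult_left[OF \<open>polyfun p\<close>] show "p (X ** Y) = 0"
    by (rule zariski_closure_vanishing)
qed

lemma zariski_closure_mult_matpow:
  assumes "mult_closed S" "X \<in> zariski_closure S" "w \<in> S"
  shows "X ** matpow w n \<in> zariski_closure S"
proof (induction n)
  case (Suc n)
  show ?case
    using zariski_closure_mult_right[OF assms(1) Suc.IH assms(3)]
    by (simp add: matpow_Suc_right matrix_mul_assoc)
qed (use assms(2) in simp)

lemma zariski_closure_mult_inverse:
  assumes S: "mult_closed S" and w: "w \<in> S" and vw: "v ** w = mat 1"
    and X: "X \<in> zariski_closure S"
  shows "X ** v \<in> zariski_closure S"
proof (rule zariski_closureI)
  fix p assume p: "polyfun p" and vanish: "\<And>s. s \<in> S \<Longrightarrow> p s = 0"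
  obtain B where "finite B" and B: "\<And>W :: mat3. (\<lambda>X. p (X ** W)) \<in> fun_vs.span B"
    using polyfun_right_translates_finite_span[OF p] by blast
  define f where "f i = (\<lambda>X. p (X ** matpow w i))" for i
  obtain n where n: "f n \<in> fun_vs.span (f ` {n<..})"
    using fun_vs.ex_in_span_successors[OF \<open>finite B\<close>, of f] B by (auto simp: f_def)
  define Y where "Y = X ** matpow v (Suc n)"
  have "g Y = 0" if "g \<in> f ` {n<..}" for g
  proof -
    from that obtain m where g: "g = f (Suc n + m)"
      by (auto simp: less_iff_Suc_add)
    have "Y ** matpow w (Suc n + m) = X ** (matpow v (Suc n) ** matpow w (Suc n)) ** matpow w m"
      by (simp only: Y_def matpow_add matrix_mul_assoc)
    also have "\<dots> = X ** matpow w m"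
      by (simp add: matpow_mult_inverse[OF vw])
    finally have "g Y = p (X ** matpow w m)"
      by (simp add: g f_def)
    also have "\<dots> = 0"
      using zariski_closure_mult_matpow[OF S X w] p vanish by (rule zariski_closure_vanishing)
    finally show ?thesis .
  qed
  moreover have "fun_vs.subspace {g. g Y = 0}"
    by (auto simp: fun_vs.subspace_def)
  ultimately have "f n Y = 0"
    using fun_vs.span_induct[OF n, of "\<lambda>g. g Y = 0"] by blast
  moreover have "Y ** matpow w n = X ** v"
    using matpow_mult_inverse[OF vw, of n]
    by (simp add: Y_def matpow_Suc flip: matrix_mul_assoc)
  ultimately show "p (X ** v) = 0"
    by (simp add: f_def)
qed

lemma zariski_closure_line:
  assumes "\<And>n. n \<ge> 1 \<Longrightarrow> C + real n *\<^sub>R D \<in> zariski_closure S"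
  shows "C + t *\<^sub>R D \<in> zariski_closure S"
proof (rule zariski_closureI)
  fix p assume p: "polyfun p" and vanish: "\<And>s. s \<in> S \<Longrightarrow> p s = 0"
  obtain Q where Q: "\<And>t. p (C + t *\<^sub>R D) = poly Q t"
    using polyfun_on_line[OF p] by blast
  have "real ` {1..} \<subseteq> {x. poly Q x = 0}"
    using zariski_closure_vanishing[OF assms p vanish] by (auto simp: Q[symmetric])
  moreover have "infinite (real ` {1::nat..})"
    using infinite_Ici[of "1::nat"] by (simp add: finite_image_iff)
  ultimately have "Q = 0"
    using poly_roots_finite finite_subset by blast
  then show "p (C + t *\<^sub>R D) = 0"
    by (simp add: Q)
qed

definition elem :: "3 \<Rightarrow> 3 \<Rightarrow> real \<Rightarrow> mat3" where
  "elem i j t = (\<chi> a b. if a = b then 1 else if a = i \<and> b = j then t else 0)"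

definition diag3 :: "real \<Rightarrow> real \<Rightarrow> real \<Rightarrow> mat3" where
  "diag3 a b c = vector [vector [a, 0, 0], vector [0, b, 0], vector [0, 0, c]]"

lemmas mat3_eq_simps = vec_eq_iff forall_3 matrix_matrix_mult_def sum_3 mat_def elem_def diag3_def

lemma elem_lower_diag_upper:
  "elem 2 1 p ** elem 3 1 q ** elem 3 2 r ** diag3 d1 d2 d3 ** elem 2 3 x ** elem 1 3 y ** elem 1 2 z =
   vector [vector [d1, d1*z, d1*y], vector [p*d1, p*d1*z + d2, p*d1*y + d2*x],
           vector [q*d1, q*d1*z + r*d2, q*d1*y + r*d2*x + d3]]"
  by (simp add: mat3_eq_simps algebra_simps)

lemma LDU_decomposition:
  fixes a b c d e f g h i :: real
  defines "\<delta> \<equiv> a*e - b*d"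
  assumes "a \<noteq> 0" "\<delta> \<noteq> 0" "det (vector [vector [a,b,c], vector [d,e,f], vector [g,h,i]] :: mat3) = 1"
  shows "(vector [vector [a,b,c], vector [d,e,f], vector [g,h,i]] :: mat3) =
    elem 2 1 (d/a) ** elem 3 1 (g/a) ** elem 3 2 ((a*h - g*b)/\<delta>) ** diag3 a (\<delta>/a) (1/\<delta>)
    ** elem 2 3 ((a*f - d*c)/\<delta>) ** elem 1 3 (c/a) ** elem 1 2 (b/a)"
proof -
  have "a * e * i + b * f * g + c * d * h - a * f * h - b * d * i - c * e * g = 1"
    using assms(4) by (simp add: det_3)
  then have "g*c*\<delta> + (a*h - g*b)*(a*f - d*c) + a = i*a*\<delta>"
    unfolding \<delta>_def by algebra
  \<comment> \<open>the (3,3) entry of the product, the only one where \<open>det = 1\<close> is needed\<close>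
  moreover have "g/a*a*(c/a) + (a*h - g*b)/\<delta> * (\<delta>/a) * ((a*f - d*c)/\<delta>) + 1/\<delta>
      = (g*c*\<delta> + (a*h - g*b)*(a*f - d*c) + a) / (a*\<delta>)"
    using assms(2,3) by (simp add: field_simps)
  ultimately have "g/a*a*(c/a) + (a*h - g*b)/\<delta> * (\<delta>/a) * ((a*f - d*c)/\<delta>) + 1/\<delta> = i"
    using assms(2,3) by simp
  with assms(2,3) show ?thesis
    unfolding elem_lower_diag_upper by (simp add: vec_eq_iff forall_3 field_simps \<delta>_def)
qed

lemma det_elem: "i \<noteq> j \<Longrightarrow> det (elem i j t) = 1"
  using exhaust_3[of i] exhaust_3[of j] by (elim disjE) (simp_all add: det_3 elem_def)

lemma elem_inverse: "i \<noteq> j \<Longrightarrow> elem i j (- t) ** elem i j t = mat 1"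
  using exhaust_3[of i] exhaust_3[of j] by (elim disjE) (simp_all add: mat3_eq_simps)

lemma det_elem_mult: "i \<noteq> j \<Longrightarrow> det (elem i j t ** M) = det M"
  by (simp add: det_mul det_elem)

lemma diag3_mult: "diag3 a b c ** diag3 a' b' c' = diag3 (a * a') (b * b') (c * c')"
  by (simp add: mat3_eq_simps)

lemma diag3_12_eq_elem_product:
  "a \<noteq> 0 \<Longrightarrow> elem 1 2 a ** elem 2 1 (- 1 / a) ** elem 1 2 a ** elem 1 2 (- 1) ** elem 2 1 1 ** elem 1 2 (- 1)
     = diag3 a (1 / a) 1"
  by (simp add: mat3_eq_simps field_simps)

lemma diag3_23_eq_elem_product:
  "b \<noteq> 0 \<Longrightarrow> elem 2 3 b ** elem 3 2 (- 1 / b) ** elem 2 3 b ** elem 2 3 (- 1) ** elem 3 2 1 ** elem 2 3 (- 1)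
     = diag3 1 b (1 / b)"
  by (simp add: mat3_eq_simps field_simps)

lemma mat3_eq_vector_entries:
  "(M :: mat3) = vector [vector [M$1$1, M$1$2, M$1$3], vector [M$2$1, M$2$2, M$2$3],
      vector [M$3$1, M$3$2, M$3$3]]"
  by (simp add: vec_eq_iff forall_3)

context
  fixes G :: "mat3 set"
  assumes G: "mult_closed G" and elem_in: "\<And>i j t. i \<noteq> j \<Longrightarrow> elem i j t \<in> G"
begin

lemma diag3_in:
  assumes "a \<noteq> 0" "\<delta> \<noteq> 0"
  shows "diag3 a (\<delta> / a) (1 / \<delta>) \<in> G"
proof -
  have "diag3 a (1 / a) 1 \<in> G" "diag3 1 \<delta> (1 / \<delta>) \<in> G"
    unfolding diag3_12_eq_elem_product[OF assms(1), symmetric]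
      diag3_23_eq_elem_product[OF assms(2), symmetric]
    by (intro mult_closedD[OF G] elem_in; simp)+
  from mult_closedD[OF G this] show ?thesis
    by (simp add: diag3_mult)
qed

lemma in_if_elem_mult_in:
  assumes "i \<noteq> j" "elem i j t ** M \<in> G"
  shows "M \<in> G"
proof -
  have "elem i j (- t) ** (elem i j t ** M) \<in> G"
    using mult_closedD[OF G elem_in[OF assms(1)] assms(2)] .
  then show ?thesis
    by (simp add: matrix_mul_assoc elem_inverse[OF assms(1)])
qed

lemma SL3_in_if_leading_minors_nonzero:
  assumes "det M = 1" "M$1$1 \<noteq> 0" "M$1$1 * M$2$2 - M$1$2 * M$2$1 \<noteq> 0"
  shows "M \<in> G"
  using assms mat3_eq_vector_entries[of M]
  by (subst mat3_eq_vector_entries, subst LDU_decomposition)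
    (auto intro!: mult_closedD[OF G] elem_in diag3_in)

lemma SL3_in_if_corner_nonzero:
  assumes det: "det M = 1" and M11: "M$1$1 \<noteq> 0"
  shows "M \<in> G"
proof (cases "M$1$1 * M$2$2 - M$1$2 * M$2$1 = 0")
  case True
  \<comment> \<open>otherwise the first two columns would be proportional\<close>
  have "M$1$1 * M$3$2 - M$1$2 * M$3$1 \<noteq> 0"
  proof
    assume "M$1$1 * M$3$2 - M$1$2 * M$3$1 = 0"
    with True det have "M$1$1 = 0"
      unfolding det_3 by algebra
    with M11 show False ..
  qed
  moreover have "det (elem 2 3 1 ** M) = 1"
    using det by (simp add: det_elem_mult)
  ultimately have "elem 2 3 1 ** M \<in> G"
    using True M11 by (intro SL3_in_if_leading_minors_nonzero) (simp_all add: mat3_eq_simps algebra_simps)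
  then show ?thesis
    by (rule in_if_elem_mult_in[rotated]) simp
qed (use assms SL3_in_if_leading_minors_nonzero in blast)

lemma SL3_subset_if_elem_in: "SL3 \<subseteq> G"
proof
  fix M assume "M \<in> SL3"
  then have det: "det M = 1"
    by (simp add: SL3_def)
  then have "M$1$1 \<noteq> 0 \<or> M$2$1 \<noteq> 0 \<or> M$3$1 \<noteq> 0"
    by (auto simp: det_3)
  then consider "M$1$1 \<noteq> 0" | "M$1$1 = 0" "M$2$1 \<noteq> 0" | "M$1$1 = 0" "M$3$1 \<noteq> 0"
    by blast
  then show "M \<in> G"
  proof cases
    case 1
    with det show ?thesis
      by (rule SL3_in_if_corner_nonzero)
  next
    case 2
    moreover have "det (elem 1 2 1 ** M) = 1"
      using det by (simp add: det_elem_mult)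
    ultimately have "elem 1 2 1 ** M \<in> G"
      by (intro SL3_in_if_corner_nonzero) (simp_all add: mat3_eq_simps)
    then show ?thesis
      by (rule in_if_elem_mult_in[rotated]) simp
  next
    case 3
    moreover have "det (elem 1 3 1 ** M) = 1"
      using det by (simp add: det_elem_mult)
    ultimately have "elem 1 3 1 ** M \<in> G"
      by (intro SL3_in_if_corner_nonzero) (simp_all add: mat3_eq_simps)
    then show ?thesis
      by (rule in_if_elem_mult_in[rotated]) simp
  qed
qed

end

definition row_unip :: "3 \<Rightarrow> real \<Rightarrow> mat3" where
  "row_unip k t = (\<chi> a b. if a = b then 1 else if a = k then t else 0)"

lemma row_unip_add: "row_unip k s ** row_unip k t = row_unip k (s + t)"
  using exhaust_3[of k] by (elim disjE) (simp_all add: mat3_eq_simps row_unip_def)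

lemma row_unip_0: "row_unip k 0 = mat 1"
  by (simp add: vec_eq_iff mat_def row_unip_def)

lemma row_unip_line: "row_unip k t = mat 1 + t *\<^sub>R (\<chi> a b. if a = k \<and> b \<noteq> k then 1 else 0)"
  by (simp add: vec_eq_iff mat_def row_unip_def)

lemma det_row_unip: "det (row_unip k t) = 1"
  using exhaust_3[of k] by (elim disjE) (simp_all add: det_3 row_unip_def)

lemma matpow_row_unip: "matpow (row_unip k 1) n = row_unip k (real n)"
  by (induction n) (simp_all add: matpow_Suc row_unip_0 row_unip_add add.commute)

lemma Amat_eq_row_unip: "i \<in> {1, 2, 3} \<Longrightarrow> Amat i = row_unip (of_nat i) 1"
  by (auto simp: vec_eq_iff forall_3 row_unip_def Amat_def A1_def A2_def A3_def)

text \<open>In each identity the middle factor is a conjugate \<open>g ** row_unip l s ** g\<inverse>\<close>.\<close>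
lemma elem_in_if_row_unip_in:
  assumes G: "mult_closed G" and row_unip_in: "\<And>k t. row_unip k t \<in> G" and "i \<noteq> j"
  shows "elem i j t \<in> G"
proof -
  let ?U = row_unip
  have "elem 1 2 t = ?U 1 (3*t/4) ** (?U 2 1 ** ?U 3 1 ** ?U 1 (-1)) ** ?U 2 (t/4) ** (?U 1 1 ** ?U 3 (-1) ** ?U 2 (-1))"
    "elem 1 3 t = ?U 1 (t/4) ** (?U 2 1 ** ?U 3 1 ** ?U 1 (-1)) ** ?U 2 (-t/4) ** (?U 1 1 ** ?U 3 (-1) ** ?U 2 (-1))"
    "elem 2 3 t = ?U 2 (3*t/4) ** (?U 3 1 ** ?U 1 1 ** ?U 2 (-1)) ** ?U 3 (t/4) ** (?U 2 1 ** ?U 1 (-1) ** ?U 3 (-1))"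
    "elem 2 1 t = ?U 2 (t/4) ** (?U 3 1 ** ?U 1 1 ** ?U 2 (-1)) ** ?U 3 (-t/4) ** (?U 2 1 ** ?U 1 (-1) ** ?U 3 (-1))"
    "elem 3 1 t = ?U 3 (3*t/4) ** (?U 1 1 ** ?U 2 1 ** ?U 3 (-1)) ** ?U 1 (t/4) ** (?U 3 1 ** ?U 2 (-1) ** ?U 1 (-1))"
    "elem 3 2 t = ?U 3 (t/4) ** (?U 1 1 ** ?U 2 1 ** ?U 3 (-1)) ** ?U 1 (-t/4) ** (?U 3 1 ** ?U 2 (-1) ** ?U 1 (-1))"
    by (simp_all add: mat3_eq_simps row_unip_def algebra_simps)
  then show ?thesis
    using exhaust_3[of i] exhaust_3[of j] \<open>i \<noteq> j\<close>
    by (elim disjE) (simp_all add: mult_closedD[OF G] row_unip_in)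
qed

lemma zariski_closure_row_unip:
  assumes S: "mult_closed S"
    and S1: "row_unip k 1 ** row_unip j 1 \<in> S" and S2: "row_unip k 2 ** row_unip j 1 \<in> S"
  shows "row_unip k t \<in> zariski_closure S"
proof -
  have "(row_unip j (-1) ** row_unip k (-1)) ** (row_unip k 1 ** row_unip j 1)
      = row_unip j (-1) ** (row_unip k (-1) ** row_unip k 1) ** row_unip j 1"
    by (simp add: matrix_mul_assoc)
  then have inverse: "(row_unip j (-1) ** row_unip k (-1)) ** (row_unip k 1 ** row_unip j 1) = mat 1"
    by (simp add: row_unip_add row_unip_0)
  have "(row_unip k 2 ** row_unip j 1) ** (row_unip j (-1) ** row_unip k (-1))
      = row_unip k 2 ** (row_unip j 1 ** row_unip j (-1)) ** row_unip k (-1)"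
    by (simp add: matrix_mul_assoc)
  then have "(row_unip k 2 ** row_unip j 1) ** (row_unip j (-1) ** row_unip k (-1)) = row_unip k 1"
    by (simp add: row_unip_add row_unip_0)
  then have one: "row_unip k 1 \<in> zariski_closure S"
    using zariski_closure_mult_inverse[OF S S1 inverse] S2 zariski_closure_subset by fastforce
  have "row_unip k (real (Suc n)) \<in> zariski_closure S" for n
  proof (induction n)
    case (Suc n)
    from zariski_closure_mult[OF S one Suc.IH] show ?case
      by (simp add: row_unip_add add.commute)
  qed (simp add: one)
  then have "row_unip k (real n) \<in> zariski_closure S" if "n \<ge> 1" for n
    using that by (cases n) auto
  then have "mat 1 + real n *\<^sub>R (\<chi> a b. if a = k \<and> b \<noteq> k then 1 else 0) \<in> zariski_closure S"
    if "n \<ge> 1" for n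
    using that by (simp only: row_unip_line)
  then show ?thesis
    unfolding row_unip_line by (rule zariski_closure_line)
qed

lemma mult_closed_semigroup_gen: "mult_closed (semigroup_gen F)"
  by (simp add: mult_closed_def semigroup_gen.mul)

lemma semigroup_gen_mono:
  assumes "F \<subseteq> F'"
  shows "semigroup_gen F \<subseteq> semigroup_gen F'"
proof
  fix x assume "x \<in> semigroup_gen F"
  then show "x \<in> semigroup_gen F'"
    by induction (use assms in \<open>auto intro: semigroup_gen.intros\<close>)
qed

lemma semigroup_gen_subset_SL3:
  assumes "F \<subseteq> SL3"
  shows "semigroup_gen F \<subseteq> SL3"
proof
  fix x assume "x \<in> semigroup_gen F"
  then show "x \<in> SL3"
    by induction (use assms in \<open>auto simp: SL3_def det_mul\<close>)
qed

lemma GammaSet_subset_SL3: "GammaSet \<subseteq> SL3"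
  by (auto simp: GammaSet_def SL3_def det_mul Amat_eq_row_unip matpow_row_unip det_row_unip)

definition Gamma0 :: "mat3 set" where
  "Gamma0 = (\<lambda>((i, j), n). matpow (Amat i) n ** Amat j) ` ({(1, 2), (2, 1), (3, 1)} \<times> {1, 2})"

lemma finite_Gamma0: "finite Gamma0"
  by (simp add: Gamma0_def)

lemma Gamma0_subset_GammaSet: "Gamma0 \<subseteq> GammaSet"
  unfolding Gamma0_def GammaSet_def by force

lemma SL3_subset_zariski_closure_Gamma0: "SL3 \<subseteq> zariski_closure (semigroup_gen Gamma0)"
proof -
  let ?S = "semigroup_gen Gamma0"
  note S = mult_closed_semigroup_gen[of Gamma0]
  have gen: "row_unip (of_nat i) (real n) ** row_unip (of_nat j) 1 \<in> ?S"
    if "(i, j) \<in> {(1, 2), (2, 1), (3, 1)}" "n \<in> {1, 2}" for i j n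
  proof -
    have "matpow (Amat i) n ** Amat j \<in> Gamma0"
      using that unfolding Gamma0_def by force
    with that show ?thesis
      by (auto simp: Amat_eq_row_unip matpow_row_unip intro: semigroup_gen.gen)
  qed
  have "row_unip 1 t \<in> zariski_closure ?S" for t
    using gen[of 1 2 1] gen[of 1 2 2] by (intro zariski_closure_row_unip[OF S, where j = 2]) simp_all
  moreover have "row_unip 2 t \<in> zariski_closure ?S" for t
    using gen[of 2 1 1] gen[of 2 1 2] by (intro zariski_closure_row_unip[OF S, where j = 1]) simp_all
  moreover have "row_unip 3 t \<in> zariski_closure ?S" for t
    using gen[of 3 1 1] gen[of 3 1 2] by (intro zariski_closure_row_unip[OF S, where j = 1]) simp_all
  ultimately have "row_unip k t \<in> zariski_closure ?S" for k t
    using exhaust_3[of k] by blast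
  moreover have closed: "mult_closed (zariski_closure ?S)"
    using zariski_closure_mult[OF S] by (simp add: mult_closed_def)
  ultimately have "elem i j t \<in> zariski_closure ?S" if "i \<noteq> j" for i j t
    using that by (intro elem_in_if_row_unip_in[OF closed])
  with closed show ?thesis
    by (rule SL3_subset_if_elem_in)
qed

lemma finite_subset_incseq_UN:
  assumes "finite F" "F \<subseteq> (\<Union>N. A N)" "incseq A"
  shows "\<exists>N. F \<subseteq> A N"
proof -
  have "A m \<subseteq> A n \<or> A n \<subseteq> A m" for m n
    using nat_le_linear[of m n] \<open>incseq A\<close> by (auto simp: incseq_def)
  then have "subset.chain UNIV (range A)"
    by (auto simp: subset.chain_def)
  then obtain B where "B \<in> range A" "F \<subseteq> B"
    using finite_subset_Union_chain[OF assms(1)] assms(2) by blast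
  then show ?thesis
    by blast
qed

theorem proposition6p8:
  fixes GN :: "nat \<Rightarrow> mat3 set"
  assumes "\<And>N. finite (GN N)"
    and "\<And>N. GN N \<subseteq> GammaSet"
    and "incseq GN"
    and "(\<Union>N. GN N) = GammaSet"
  shows "\<exists>N0. \<forall>N\<ge>N0. zariski_dense_SL3 (semigroup_gen (GN N))"
proof -
  obtain N0 where N0: "Gamma0 \<subseteq> GN N0"
    using finite_subset_incseq_UN[OF finite_Gamma0 _ assms(3)] Gamma0_subset_GammaSet assms(4)
    by auto
  have "zariski_dense_SL3 (semigroup_gen (GN N))" if "N \<ge> N0" for N
  proof -
    have "Gamma0 \<subseteq> GN N"
      using N0 \<open>incseq GN\<close> that by (auto simp: incseq_def)
    then have "SL3 \<subseteq> zariski_closure (semigroup_gen (GN N))"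
      using SL3_subset_zariski_closure_Gamma0 zariski_closure_mono semigroup_gen_mono by blast
    moreover have "semigroup_gen (GN N) \<subseteq> SL3"
      using assms(2) GammaSet_subset_SL3 by (intro semigroup_gen_subset_SL3) blast
    ultimately show ?thesis
      by (auto simp: zariski_dense_SL3_def zariski_closure_SL3_eq)
  qed
  then show ?thesis
    by blast
qed

end
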